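(* Let $M$ be a $\Sigma$-automaton and $0<\xi<1$ such that $(\Sigma^\infty,\rho_{M,\xi})$ is a pseudo-quasimetric space. Then the induced pseudo-metric space $(\mathcal A_M,\tilde\rho_{M,\xi})$ is complete: every sequence $(a_k)$ in $\mathcal A_M$ with $\tilde\rho_{M,\xi}(a_m,a_n)\to0$ as $m,n\to\infty$ has a limit $a\in\mathcal A_M$ with $\tilde\rho_{M,\xi}(a_k,a)\to0$.
   Context: $\Sigma=\{1,\dots,N\}$. A $\Sigma$-automaton $M$ has finite state set $Q=Q_0\cup\{Id,Exit\}$, input alphabet $\Sigma^2$, initial state $Id$, final state $Exit$, transition $\delta:Q\times\Sigma^2\to Q$ with $\delta(Id,(i,j))=Id$ iff $i=j$. Itinerary of $(\mathbf x,\mathbf y)$: $S_0=Id$, $S_k=\delta(S_{k-1},(x_k,y_k))$, stopped at $Exit$; $T_M(\mathbf x,\mathbf y)$ = largest $k$ with $S_k\ne Exit$ (possibly $\infty$); $\rho_{M,\xi}(\mathbf x,\mathbf y)=\xi^{T_M(\mathbf x,\mathbf y)}$ ($\xi^\infty=0$). A pseudo-quasimetric space $(\mathcal A,\rho)$: $\rho\ge0$, $\rho(x,x)=0$, symmetric, $\rho(x,z)\le C(\rho(x,y)+\rho(y,z))$ for a fixed $C\ge1$. $\mathcal A_M=\Sigma^\infty/\sim$ where $\mathbf x\sim\mathbf y$ iff $\rho_{M,\xi}(\mathbf x,\mathbf y)=0$, and $\tilde\rho_{M,\xi}([\mathbf x],[\mathbf y])=\inf\{\rho_{M,\xi}(\mathbf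 a,\mathbf b):\mathbf a\in[\mathbf x],\mathbf b\in[\mathbf y]\}$. *)

theory Defs
  imports "HOL-Analysis.Analysis" "HOL-Library.Extended_Nat"
begin

(* Alphabet Sigma = {1..N}; infinite words are functions nat => nat,
   where x k encodes the letter x_{k+1}. *)
definition SigmaInf :: "nat \<Rightarrow> (nat \<Rightarrow> nat) set" where
  "SigmaInf N = {x. \<forall>k. x k \<in> {1..N}}"

(* A Sigma-automaton with state set Q (= Q_0 \<union> {Id, Exit}),
   transition function delta, initial state qId, final state qExit. *)
definition sigma_automaton ::
  "nat \<Rightarrow> 'q set \<Rightarrow> ('q \<Rightarrow> nat \<times> nat \<Rightarrow> 'q) \<Rightarrow> 'q \<Rightarrow> 'q \<Rightarrow> bool" where
  "sigma_automaton N Q \<delta> qId qExit \<longleftrightarrow>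
     finite Q \<and> qId \<in> Q \<and> qExit \<in> Q \<and> qId \<noteq> qExit \<and>
     (\<forall>q\<in>Q. \<forall>i\<in>{1..N}. \<forall>j\<in>{1..N}. \<delta> q (i, j) \<in> Q) \<and>
     (\<forall>i\<in>{1..N}. \<forall>j\<in>{1..N}. (\<delta> qId (i, j) = qId \<longleftrightarrow> i = j))"

fun itinerary ::
  "('q \<Rightarrow> nat \<times> nat \<Rightarrow> 'q) \<Rightarrow> 'q \<Rightarrow> 'q \<Rightarrow> (nat \<Rightarrow> nat) \<Rightarrow> (nat \<Rightarrow> nat) \<Rightarrow> nat \<Rightarrow> 'q" where
  "itinerary \<delta> qId qExit x y 0 = qId"
| "itinerary \<delta> qId qExit x y (Suc k) =
     (let s = itinerary \<delta> qId qExit x y k in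
      if s = qExit then qExit else \<delta> s (x k, y k))"

definition T_M ::
  "('q \<Rightarrow> nat \<times> nat \<Rightarrow> 'q) \<Rightarrow> 'q \<Rightarrow> 'q \<Rightarrow> (nat \<Rightarrow> nat) \<Rightarrow> (nat \<Rightarrow> nat) \<Rightarrow> enat" where
  "T_M \<delta> qId qExit x y =
     (if finite {k. itinerary \<delta> qId qExit x y k \<noteq> qExit}
      then enat (Max {k. itinerary \<delta> qId qExit x y k \<noteq> qExit})
      else \<infinity>)"

definition rho_M ::
  "('q \<Rightarrow> nat \<times> nat \<Rightarrow> 'q) \<Rightarrow> 'q \<Rightarrow> 'q \<Rightarrow> real \<Rightarrow> (nat \<Rightarrow> nat) \<Rightarrow> (nat \<Rightarrow> nat) \<Rightarrow> real" where
  "rho_M \<delta> qId qExit \<xi> x y =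
     (case T_M \<delta> qId qExit x y of enat n \<Rightarrow> \<xi> ^ n | \<infinity> \<Rightarrow> 0)"

definition pseudo_quasimetric :: "'a set \<Rightarrow> ('a \<Rightarrow> 'a \<Rightarrow> real) \<Rightarrow> bool" where
  "pseudo_quasimetric A \<rho> \<longleftrightarrow>
     (\<forall>x\<in>A. \<forall>y\<in>A. \<rho> x y \<ge> 0 \<and> \<rho> y x = \<rho> x y) \<and>
     (\<forall>x\<in>A. \<rho> x x = 0) \<and>
     (\<exists>C\<ge>1. \<forall>x\<in>A. \<forall>y\<in>A. \<forall>z\<in>A. \<rho> x z \<le> C * (\<rho> x y + \<rho> y z))"

definition zero_rel :: "'a set \<Rightarrow> ('a \<Rightarrow> 'a \<Rightarrow> real) \<Rightarrow> ('a \<times> 'a) set" where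
  "zero_rel A \<rho> = {(x, y). x \<in> A \<and> y \<in> A \<and> \<rho> x y = 0}"

definition quot_space :: "'a set \<Rightarrow> ('a \<Rightarrow> 'a \<Rightarrow> real) \<Rightarrow> 'a set set" where
  "quot_space A \<rho> = A // zero_rel A \<rho>"

definition quot_dist :: "('a \<Rightarrow> 'a \<Rightarrow> real) \<Rightarrow> 'a set \<Rightarrow> 'a set \<Rightarrow> real" where
  "quot_dist \<rho> X Y = Inf {\<rho> a b | a b. a \<in> X \<and> b \<in> Y}"

end

theory Submission
  imports Defs
begin

(* Pick a representative in each class. Points of one class are at distance 0, so the
   quasi-triangle inequality bounds the distance of two representatives by C^2 times the distance
   of their classes, and the representatives form a rho-Cauchy sequence of words. Such a sequence
   need not converge letterwise, because states other than Id may accept differing letters; but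
   for every n, the itineraries of all pairs of late terms survive n steps. By compactness of the
   product of finite alphabets a subsequence converges letterwise, and since the first n steps of
   an itinerary only read the first n letters, its limit z satisfies rho(x_k, z) <= xi^n for all
   late k. The class of z is the limit of the given sequence. *)

lemma finite_alphabet_pointwise_convergent_subseq:
  fixes x :: "nat \<Rightarrow> nat \<Rightarrow> nat"
  assumes "finite A" and "\<And>k i. x k i \<in> A"
  obtains z r where "strict_mono r" "\<And>i. z i \<in> A"
    "\<And>i. eventually (\<lambda>j. x (r j) i = z i) sequentially"
proof -
  have "compactin (product_topology (\<lambda>_. euclidean) UNIV) (PiE UNIV (\<lambda>_::nat. A))"
    using assms(1) by (simp add: compactin_PiE finite_imp_compact)
  then have "compact (PiE UNIV (\<lambda>_::nat. A))"
    by (simp only: euclidean_product_topology compactin_euclidean_iff)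
  moreover have "x k \<in> PiE UNIV (\<lambda>_. A)" for k
    using assms(2) by auto
  ultimately obtain z r where z: "z \<in> PiE UNIV (\<lambda>_. A)" and r: "strict_mono r"
    and lim: "(x \<circ> r) \<longlonglongrightarrow> z"
    using compact_imp_seq_compact unfolding seq_compact_def by meson
  have "eventually (\<lambda>j. x (r j) i = z i) sequentially" for i
  proof -
    have "((\<lambda>j. (x \<circ> r) j i) \<longlongrightarrow> z i) sequentially"
      by (rule continuous_on_tendsto_compose[OF continuous_on_product_coordinates lim]) auto
    from topological_tendstoD[OF this, of "{z i}"] show ?thesis
      by (simp add: open_discrete)
  qed
  with z r show thesis
    using that by (auto simp: PiE_iff)
qed

lemma itinerary_Exit_absorbing:
  "itinerary \<delta> qId qExit x y n = qExit \<Longrightarrow> n \<le> m \<Longrightarrow> itinerary \<delta> qId qExit x y m = qExit"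
proof (induction m)
  case (Suc m)
  then show ?case by (cases "n = Suc m") (auto simp: Let_def)
qed simp

lemma itinerary_cong_prefix:
  "(\<And>i. i < n \<Longrightarrow> x i = x' i \<and> y i = y' i) \<Longrightarrow>
   itinerary \<delta> qId qExit x y n = itinerary \<delta> qId qExit x' y' n"
  by (induction n) (auto simp: Let_def)

lemma rho_M_nonneg: "0 < \<xi> \<Longrightarrow> 0 \<le> rho_M \<delta> qId qExit \<xi> x y"
  by (auto simp: rho_M_def split: enat.split)

lemma rho_M_le_power:
  assumes "0 < \<xi>" "\<xi> < 1" "itinerary \<delta> qId qExit x y n \<noteq> qExit"
  shows "rho_M \<delta> qId qExit \<xi> x y \<le> \<xi> ^ n"
proof (cases "finite {k. itinerary \<delta> qId qExit x y k \<noteq> qExit}")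
  case True
  then have "n \<le> Max {k. itinerary \<delta> qId qExit x y k \<noteq> qExit}"
    using assms(3) by auto
  with True assms show ?thesis
    by (simp add: rho_M_def T_M_def power_decreasing)
qed (use assms in \<open>simp add: rho_M_def T_M_def\<close>)

lemma itinerary_not_Exit_if_rho_M_less_power:
  assumes "0 < \<xi>" "\<xi> < 1" "qId \<noteq> qExit" "rho_M \<delta> qId qExit \<xi> x y < \<xi> ^ n"
  shows "itinerary \<delta> qId qExit x y n \<noteq> qExit"
proof
  assume Exit: "itinerary \<delta> qId qExit x y n = qExit"
  let ?A = "{k. itinerary \<delta> qId qExit x y k \<noteq> qExit}"
  have sub: "?A \<subseteq> {..<n}"
  proof
    fix k
    assume "k \<in> ?A"
    then show "k \<in> {..<n}"
      using itinerary_Exit_absorbing[OF Exit, of k] by (cases "n \<le> k") auto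
  qed
  then have fin: "finite ?A"
    by (rule finite_subset) simp
  moreover have "0 \<in> ?A"
    using assms(3) by simp
  ultimately have "Max ?A \<le> n"
    using sub by (metis Max_in empty_iff lessThan_iff less_imp_le subsetD)
  with fin have "\<xi> ^ n \<le> rho_M \<delta> qId qExit \<xi> x y"
    using assms(1,2) by (simp add: rho_M_def T_M_def power_decreasing)
  with assms(4) show False
    by simp
qed

lemma rho_M_Cauchy_imp_convergent:
  assumes "0 < \<xi>" "\<xi> < 1" "qId \<noteq> qExit" and x: "\<And>k. x k \<in> SigmaInf N"
    and Cauchy: "\<forall>\<epsilon>>0. \<exists>K. \<forall>m\<ge>K. \<forall>n\<ge>K. rho_M \<delta> qId qExit \<xi> (x m) (x n) < \<epsilon>"
  obtains z where "z \<in> SigmaInf N" "(\<lambda>k. rho_M \<delta> qId qExit \<xi> (x k) z) \<longlonglongrightarrow> 0"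
proof -
  let ?It = "itinerary \<delta> qId qExit" and ?\<rho> = "rho_M \<delta> qId qExit \<xi>"
  have "\<forall>n. \<exists>K. \<forall>m\<ge>K. \<forall>k\<ge>K. ?It (x m) (x k) n \<noteq> qExit"
  proof
    fix n
    obtain K where "\<forall>m\<ge>K. \<forall>k\<ge>K. ?\<rho> (x m) (x k) < \<xi> ^ n"
      using Cauchy[rule_format, of "\<xi> ^ n"] assms(1) by auto
    then show "\<exists>K. \<forall>m\<ge>K. \<forall>k\<ge>K. ?It (x m) (x k) n \<noteq> qExit"
      using itinerary_not_Exit_if_rho_M_less_power[OF assms(1-3)] by blast
  qed
  from choice[OF this] obtain K
    where K: "\<forall>n. \<forall>m\<ge>K n. \<forall>k\<ge>K n. ?It (x m) (x k) n \<noteq> qExit"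
    by blast
  have "x k i \<in> {1..N}" for k i
    using x by (simp add: SigmaInf_def)
  then obtain z r where r: "strict_mono r" and z: "\<And>i. z i \<in> {1..N}"
    and zlim: "\<And>i. eventually (\<lambda>j. x (r j) i = z i) sequentially"
    using finite_alphabet_pointwise_convergent_subseq[OF finite_atLeastAtMost] by blast
  have close: "?\<rho> (x m) z \<le> \<xi> ^ n" if "m \<ge> K n" for m n
  proof -
    have "eventually (\<lambda>j. \<forall>i\<in>{..<n}. x (r j) i = z i) sequentially"
      using zlim by (simp add: eventually_ball_finite)
    moreover have "eventually (\<lambda>j. r j \<ge> K n) sequentially"
      using filterlim_subseq[OF r] by (simp add: filterlim_at_top)
    ultimately have "eventually (\<lambda>j. (\<forall>i\<in>{..<n}. x (r j) i = z i) \<and> r j \<ge> K n) sequentially"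
      by (rule eventually_conj)
    then obtain j where j: "\<forall>i\<in>{..<n}. x (r j) i = z i" "r j \<ge> K n"
      using eventually_happens'[OF trivial_limit_sequentially] by blast
    have "?It (x m) z n = ?It (x m) (x (r j)) n"
      using j(1) by (intro itinerary_cong_prefix) auto
    also have "\<dots> \<noteq> qExit"
      using K that j(2) by blast
    finally show ?thesis
      by (rule rho_M_le_power[OF assms(1,2)])
  qed
  have "(\<lambda>k. ?\<rho> (x k) z) \<longlonglongrightarrow> 0"
  proof (rule LIMSEQ_I)
    fix e :: real
    assume "e > 0"
    then obtain n where n: "\<xi> ^ n < e"
      using real_arch_pow_inv assms(2) by blast
    have "norm (?\<rho> (x m) z - 0) < e" if "m \<ge> K n" for m
      using close[OF that] rho_M_nonneg[OF assms(1), of \<delta> qId qExit "x m" z] n by simp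
    then show "\<exists>K. \<forall>m\<ge>K. norm (?\<rho> (x m) z - 0) < e"
      by blast
  qed
  moreover have "z \<in> SigmaInf N"
    using z by (simp add: SigmaInf_def)
  ultimately show thesis
    using that by blast
qed

lemma pseudo_quasimetric_nonneg: "pseudo_quasimetric A \<rho> \<Longrightarrow> x \<in> A \<Longrightarrow> y \<in> A \<Longrightarrow> 0 \<le> \<rho> x y"
  by (simp add: pseudo_quasimetric_def)

lemma pseudo_quasimetric_sym: "pseudo_quasimetric A \<rho> \<Longrightarrow> x \<in> A \<Longrightarrow> y \<in> A \<Longrightarrow> \<rho> y x = \<rho> x y"
  by (simp add: pseudo_quasimetric_def)

lemma pseudo_quasimetric_refl: "pseudo_quasimetric A \<rho> \<Longrightarrow> x \<in> A \<Longrightarrow> \<rho> x x = 0"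
  by (simp add: pseudo_quasimetric_def)

lemma pseudo_quasimetric_triangleE:
  assumes "pseudo_quasimetric A \<rho>"
  obtains C where "C \<ge> 1"
    and "\<And>x y z. x \<in> A \<Longrightarrow> y \<in> A \<Longrightarrow> z \<in> A \<Longrightarrow> \<rho> x z \<le> C * (\<rho> x y + \<rho> y z)"
  using assms unfolding pseudo_quasimetric_def by blast

lemma equiv_zero_rel:
  assumes "pseudo_quasimetric A \<rho>"
  shows "equiv A (zero_rel A \<rho>)"
proof (rule equivI)
  show "zero_rel A \<rho> \<subseteq> A \<times> A"
    by (auto simp: zero_rel_def)
  show "refl_on A (zero_rel A \<rho>)"
    using pseudo_quasimetric_refl[OF assms] by (simp add: zero_rel_def refl_on_def)
  show "sym (zero_rel A \<rho>)"
  proof (rule symI)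
    fix x y
    assume "(x, y) \<in> zero_rel A \<rho>"
    then show "(y, x) \<in> zero_rel A \<rho>"
      using pseudo_quasimetric_sym[OF assms, of x y] by (simp add: zero_rel_def)
  qed
  obtain C where tri: "\<And>x y z. x \<in> A \<Longrightarrow> y \<in> A \<Longrightarrow> z \<in> A \<Longrightarrow> \<rho> x z \<le> C * (\<rho> x y + \<rho> y z)"
    using pseudo_quasimetric_triangleE[OF assms] by metis
  show "trans (zero_rel A \<rho>)"
  proof (rule transI)
    fix x y z
    assume "(x, y) \<in> zero_rel A \<rho>" "(y, z) \<in> zero_rel A \<rho>"
    then have "x \<in> A" "y \<in> A" "z \<in> A" "\<rho> x y = 0" "\<rho> y z = 0"
      by (simp_all add: zero_rel_def)
    then show "(x, z) \<in> zero_rel A \<rho>"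
      using tri[of x y z] pseudo_quasimetric_nonneg[OF assms, of x z] by (simp add: zero_rel_def)
  qed
qed

lemma quot_space_class_nonempty:
  "pseudo_quasimetric A \<rho> \<Longrightarrow> X \<in> quot_space A \<rho> \<Longrightarrow> X \<noteq> {}"
  unfolding quot_space_def by (rule in_quotient_imp_non_empty[OF equiv_zero_rel])

lemma quot_space_class_subset:
  "pseudo_quasimetric A \<rho> \<Longrightarrow> X \<in> quot_space A \<rho> \<Longrightarrow> X \<subseteq> A"
  unfolding quot_space_def by (rule in_quotient_imp_subset[OF equiv_zero_rel])

lemma quot_space_class_dist_zero:
  assumes "pseudo_quasimetric A \<rho>" "X \<in> quot_space A \<rho>" "p \<in> X" "q \<in> X"
  shows "\<rho> p q = 0"
  using in_quotient_imp_in_rel[OF equiv_zero_rel[OF assms(1)], of X p q] assms(2-4)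
  by (simp add: quot_space_def zero_rel_def)

lemma zero_rel_class_in_quot_space: "z \<in> A \<Longrightarrow> zero_rel A \<rho> `` {z} \<in> quot_space A \<rho>"
  unfolding quot_space_def by (rule quotientI)

lemma zero_rel_class_self:
  "pseudo_quasimetric A \<rho> \<Longrightarrow> z \<in> A \<Longrightarrow> z \<in> zero_rel A \<rho> `` {z}"
  by (rule equiv_class_self[OF equiv_zero_rel])

lemma quot_space_rep_dist_nonneg:
  assumes "pseudo_quasimetric A \<rho>" "X \<in> quot_space A \<rho>" "Y \<in> quot_space A \<rho>" "p \<in> X" "q \<in> Y"
  shows "0 \<le> \<rho> p q"
proof (rule pseudo_quasimetric_nonneg[OF assms(1)])
  show "p \<in> A" "q \<in> A"
    using quot_space_class_subset[OF assms(1)] assms(2-5) by blast+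
qed

lemma quot_dist_nonneg:
  assumes "pseudo_quasimetric A \<rho>" "X \<in> quot_space A \<rho>" "Y \<in> quot_space A \<rho>"
  shows "0 \<le> quot_dist \<rho> X Y"
proof -
  obtain p q where "p \<in> X" "q \<in> Y"
    using quot_space_class_nonempty[OF assms(1,2)] quot_space_class_nonempty[OF assms(1,3)] by blast
  then have "{\<rho> a b | a b. a \<in> X \<and> b \<in> Y} \<noteq> {}"
    by blast
  moreover have "0 \<le> r" if "r \<in> {\<rho> a b | a b. a \<in> X \<and> b \<in> Y}" for r
    using that quot_space_rep_dist_nonneg[OF assms] by auto
  ultimately show ?thesis
    unfolding quot_dist_def by (rule cInf_greatest)
qed

lemma quot_dist_le_rep_dist:
  assumes "pseudo_quasimetric A \<rho>" "X \<in> quot_space A \<rho>" "Y \<in> quot_space A \<rho>"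
    and "p \<in> X" "q \<in> Y"
  shows "quot_dist \<rho> X Y \<le> \<rho> p q"
  unfolding quot_dist_def
proof (rule cInf_lower)
  show "\<rho> p q \<in> {\<rho> a b | a b. a \<in> X \<and> b \<in> Y}"
    using assms(4,5) by blast
  show "bdd_below {\<rho> a b | a b. a \<in> X \<and> b \<in> Y}"
    using quot_space_rep_dist_nonneg[OF assms(1-3)] by (auto intro: bdd_belowI[of _ 0])
qed

lemma rep_dist_le_quot_dist:
  assumes "pseudo_quasimetric A \<rho>" and C: "C \<ge> 1"
    and tri: "\<And>x y z. x \<in> A \<Longrightarrow> y \<in> A \<Longrightarrow> z \<in> A \<Longrightarrow> \<rho> x z \<le> C * (\<rho> x y + \<rho> y z)"
    and X: "X \<in> quot_space A \<rho>" and Y: "Y \<in> quot_space A \<rho>" and "x \<in> X" "y \<in> Y"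
  shows "\<rho> x y \<le> C\<^sup>2 * quot_dist \<rho> X Y"
proof -
  have sub: "X \<subseteq> A" "Y \<subseteq> A"
    using X Y quot_space_class_subset[OF assms(1)] by blast+
  have "\<rho> x y / C\<^sup>2 \<le> \<rho> p q" if "p \<in> X" "q \<in> Y" for p q
  proof -
    have "\<rho> x y \<le> C * \<rho> p y"
      using tri[of x p y] quot_space_class_dist_zero[OF assms(1) X \<open>x \<in> X\<close> \<open>p \<in> X\<close>]
        sub \<open>x \<in> X\<close> \<open>y \<in> Y\<close> that by auto
    also have "\<dots> \<le> C * (C * \<rho> p q)"
      using tri[of p q y] quot_space_class_dist_zero[OF assms(1) Y \<open>q \<in> Y\<close> \<open>y \<in> Y\<close>]
        sub \<open>y \<in> Y\<close> that C by auto
    finally show ?thesis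
      using C by (simp add: divide_le_eq power2_eq_square mult.commute mult.left_commute)
  qed
  then have "\<rho> x y / C\<^sup>2 \<le> quot_dist \<rho> X Y"
    unfolding quot_dist_def using \<open>x \<in> X\<close> \<open>y \<in> Y\<close> by (intro cInf_greatest) blast+
  with C show ?thesis
    by (simp add: divide_le_eq mult.commute)
qed

lemma Cauchy_classes_imp_Cauchy_representatives:
  assumes "pseudo_quasimetric A \<rho>" "\<And>k. a k \<in> quot_space A \<rho>" "\<And>k. x k \<in> a k"
    and "\<forall>\<epsilon>>0. \<exists>K. \<forall>m\<ge>K. \<forall>n\<ge>K. quot_dist \<rho> (a m) (a n) < \<epsilon>"
  shows "\<forall>\<epsilon>>0. \<exists>K. \<forall>m\<ge>K. \<forall>n\<ge>K. \<rho> (x m) (x n) < \<epsilon>"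
proof (intro allI impI)
  fix \<epsilon> :: real
  assume "\<epsilon> > 0"
  obtain C where C: "C \<ge> 1"
    and tri: "\<And>x y z. x \<in> A \<Longrightarrow> y \<in> A \<Longrightarrow> z \<in> A \<Longrightarrow> \<rho> x z \<le> C * (\<rho> x y + \<rho> y z)"
    using pseudo_quasimetric_triangleE[OF assms(1)] by metis
  have "\<epsilon> / C\<^sup>2 > 0"
    using \<open>\<epsilon> > 0\<close> C by simp
  with assms(4) obtain K where K: "\<forall>m\<ge>K. \<forall>n\<ge>K. quot_dist \<rho> (a m) (a n) < \<epsilon> / C\<^sup>2"
    by auto
  have "\<rho> (x m) (x n) < \<epsilon>" if "m \<ge> K" "n \<ge> K" for m n
  proof -
    have "\<rho> (x m) (x n) \<le> C\<^sup>2 * quot_dist \<rho> (a m) (a n)"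
      by (rule rep_dist_le_quot_dist[OF assms(1) C tri assms(2,2,3,3)])
    also have "\<dots> < \<epsilon>"
      using K that C by (simp add: pos_less_divide_eq mult.commute)
    finally show ?thesis .
  qed
  then show "\<exists>K. \<forall>m\<ge>K. \<forall>n\<ge>K. \<rho> (x m) (x n) < \<epsilon>"
    by blast
qed

lemma quot_dist_tendsto_zero_if_representatives_converge:
  assumes "pseudo_quasimetric A \<rho>" "\<And>k. a k \<in> quot_space A \<rho>" "\<And>k. x k \<in> a k"
    and "z \<in> A" "(\<lambda>k. \<rho> (x k) z) \<longlonglongrightarrow> 0"
  shows "(\<lambda>k. quot_dist \<rho> (a k) (zero_rel A \<rho> `` {z})) \<longlonglongrightarrow> 0"
proof (rule Lim_null_comparison[OF _ assms(5)])
  let ?b = "zero_rel A \<rho> `` {z}"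
  have b: "?b \<in> quot_space A \<rho>" "z \<in> ?b"
    by (rule zero_rel_class_in_quot_space[OF assms(4)], rule zero_rel_class_self[OF assms(1,4)])
  show "\<forall>\<^sub>F k in sequentially. norm (quot_dist \<rho> (a k) ?b) \<le> \<rho> (x k) z"
    using quot_dist_nonneg[OF assms(1,2) b(1)] quot_dist_le_rep_dist[OF assms(1,2) b(1) assms(3) b(2)]
    by simp
qed

theorem lemma2p3:
  fixes N :: nat and Q :: "'q set" and \<delta> :: "'q \<Rightarrow> nat \<times> nat \<Rightarrow> 'q"
    and qId qExit :: 'q and \<xi> :: real
  assumes "sigma_automaton N Q \<delta> qId qExit"
    and "0 < \<xi>" and "\<xi> < 1"
    and "pseudo_quasimetric (SigmaInf N) (rho_M \<delta> qId qExit \<xi>)"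
  shows "\<forall>a :: nat \<Rightarrow> (nat \<Rightarrow> nat) set.
     (\<forall>k. a k \<in> quot_space (SigmaInf N) (rho_M \<delta> qId qExit \<xi>)) \<longrightarrow>
     (\<forall>\<epsilon>>0. \<exists>K. \<forall>m\<ge>K. \<forall>n\<ge>K. quot_dist (rho_M \<delta> qId qExit \<xi>) (a m) (a n) < \<epsilon>) \<longrightarrow>
     (\<exists>b \<in> quot_space (SigmaInf N) (rho_M \<delta> qId qExit \<xi>).
        (\<lambda>k. quot_dist (rho_M \<delta> qId qExit \<xi>) (a k) b) \<longlonglongrightarrow> 0)"
proof (intro allI impI)
  let ?\<rho> = "rho_M \<delta> qId qExit \<xi>" and ?A = "SigmaInf N"
  fix a :: "nat \<Rightarrow> (nat \<Rightarrow> nat) set"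
  assume a: "\<forall>k. a k \<in> quot_space ?A ?\<rho>"
    and Cauchy: "\<forall>\<epsilon>>0. \<exists>K. \<forall>m\<ge>K. \<forall>n\<ge>K. quot_dist ?\<rho> (a m) (a n) < \<epsilon>"
  define x where "x k = (SOME p. p \<in> a k)" for k
  have x: "x k \<in> a k" for k
    using quot_space_class_nonempty[OF assms(4) a[rule_format]] unfolding x_def by (metis some_in_eq)
  then have xA: "x k \<in> ?A" for k
    using quot_space_class_subset[OF assms(4) a[rule_format]] by blast
  have "qId \<noteq> qExit"
    using assms(1) by (simp add: sigma_automaton_def)
  then obtain z where z: "z \<in> ?A" "(\<lambda>k. ?\<rho> (x k) z) \<longlonglongrightarrow> 0"
    using rho_M_Cauchy_imp_convergent[OF assms(2,3) _ xA
        Cauchy_classes_imp_Cauchy_representatives[OF assms(4) a[rule_format] x Cauchy]]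
    by metis
  have "(\<lambda>k. quot_dist ?\<rho> (a k) (zero_rel ?A ?\<rho> `` {z})) \<longlonglongrightarrow> 0"
    using a x z by (intro quot_dist_tendsto_zero_if_representatives_converge[OF assms(4)]) auto
  moreover have "zero_rel ?A ?\<rho> `` {z} \<in> quot_space ?A ?\<rho>"
    using z(1) by (rule zero_rel_class_in_quot_space)
  ultimately show "\<exists>b\<in>quot_space ?A ?\<rho>. (\<lambda>k. quot_dist ?\<rho> (a k) b) \<longlonglongrightarrow> 0"
    by blast
qed

end
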